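(* Let $n\ge3$ and $2\le m\le n-1$. Then $$\mathcal{H}^{[n]}_{K;m}(t)=\sum_{k\ge1}c^{[n]}_{k;m}t^k=\frac{t^{m-1}\mathcal{A}_{m-2}(1/t)}{t^n\mathcal{K}_n(1/t)}.$$
   Context: $K^{\infty}_n=\langle y_1,\dots,y_n\mid y_iy_j=y_jy_i\ (j+2\le i\le n-1),\ y_ny_k=y_ky_n\ (1\le k\le n-3)\rangle$. $c^{[n]}_{k;m}$ is the number of elements of $K^\infty_n$ of length $k$ whose smallest representative word in length-lexicographic order ($y_1<\cdots<y_n$) begins with $y_m$. $\mathcal{K}_n(\lambda)=\det(\lambda I_n-M_n)$ where $(M_n)_{j,i}=1$ if $i\ge j-1$ or $(j,i)=(n,n-2)$, $0$ otherwise. $\mathcal{A}_r(\lambda)=\det(\lambda I_r-N_r)$ for $r\ge1$ with $(N_r)_{j,i}=1$ if $i\ge j-1$, $0$ otherwise, and $\mathcal{A}_0=1$. *)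

theory Defs
  imports Complex_Main "Jordan_Normal_Form.Char_Poly"
begin

(* Generators y_1..y_n are encoded as the natural numbers 1..n; words are lists. *)

definition Kcomm0 :: "nat \<Rightarrow> nat \<Rightarrow> nat \<Rightarrow> bool" where
  "Kcomm0 n i j \<longleftrightarrow> (1 \<le> j \<and> j + 2 \<le> i \<and> i \<le> n - 1) \<or> (i = n \<and> 1 \<le> j \<and> j \<le> n - 3)"

definition Kcomm :: "nat \<Rightarrow> nat \<Rightarrow> nat \<Rightarrow> bool" where
  "Kcomm n a b \<longleftrightarrow> Kcomm0 n a b \<or> Kcomm0 n b a"

definition Kstep :: "nat \<Rightarrow> nat list \<Rightarrow> nat list \<Rightarrow> bool" where
  "Kstep n w w' \<longleftrightarrow> (\<exists>u v a b. Kcomm n a b \<and> w = u @ [a, b] @ v \<and> w' = u @ [b, a] @ v)"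

definition Keq :: "nat \<Rightarrow> nat list \<Rightarrow> nat list \<Rightarrow> bool" where
  "Keq n = (Kstep n)\<^sup>*\<^sup>*"

definition Kwords :: "nat \<Rightarrow> nat list set" where
  "Kwords n = {w. set w \<subseteq> {1..n}}"

(* the element of K^infty_n represented by a word, as its set of representative words *)
definition Kclass :: "nat \<Rightarrow> nat list \<Rightarrow> nat list set" where
  "Kclass n w = {w' \<in> Kwords n. Keq n w w'}"

definition Kelems :: "nat \<Rightarrow> nat \<Rightarrow> nat list set set" where
  "Kelems n k = {Kclass n w | w. w \<in> Kwords n \<and> length w = k}"

definition is_llex_min :: "nat list \<Rightarrow> nat list set \<Rightarrow> bool" where
  "is_llex_min w X \<longleftrightarrow> w \<in> X \<and> (\<forall>w'\<in>X. w' \<noteq> w \<longrightarrow> (w, w') \<in> lenlex {(a, b). a < b})"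

definition c_coef :: "nat \<Rightarrow> nat \<Rightarrow> nat \<Rightarrow> nat" where
  "c_coef n k m = card {X \<in> Kelems n k. \<exists>w. is_llex_min w X \<and> w \<noteq> [] \<and> hd w = m}"

(* M_n, with 0-based indices: entry (j,i) (row j, column i) *)
definition M_mat :: "nat \<Rightarrow> real mat" where
  "M_mat n = mat n n (\<lambda>(j, i). if i + 1 \<ge> j \<or> (j = n - 1 \<and> i = n - 3) then 1 else 0)"

definition N_mat :: "nat \<Rightarrow> real mat" where
  "N_mat r = mat r r (\<lambda>(j, i). if i + 1 \<ge> j then 1 else 0)"

definition K_poly :: "nat \<Rightarrow> real poly" where
  "K_poly n = char_poly (M_mat n)"

definition A_poly :: "nat \<Rightarrow> real poly" where
  "A_poly r = (if r = 0 then 1 else char_poly (N_mat r))"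

end

theory Submission
  imports Defs
begin

text \<open>Call a word normal if no letter is immediately followed by a smaller letter commuting with it.
  The length-lexicographically least representative of an element is normal, and a normal word is
  determined by its element, since commutations preserve the projection of a word onto any pair of
  non-commuting letters. So \<open>c_coef n k m\<close> counts walks of length \<open>k - 1\<close> from \<open>m\<close> in the digraph
  with adjacency matrix \<open>M\<^sub>n\<close>, and for small \<open>t\<close> the vector \<open>h\<close> of generating functions of the walks
  solves \<open>(1 - t M\<^sub>n) h = (1, \<dots>, 1)\<close>. By Cramer's rule \<open>h\<^sub>m\<close> is a quotient of determinants: the
  denominator is \<open>t\<^sup>n K\<^sub>n(1/t)\<close>, and row differences followed by a column expansion reduce the
  numerator to \<open>det (1 - t N\<^sub>m\<^sub>-\<^sub>2) = t\<^sup>m\<^sup>-\<^sup>2 A\<^sub>m\<^sub>-\<^sub>2(1/t)\<close>.\<close>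

section \<open>Normal forms of words\<close>

text \<open>\<open>Kadmissible n x y\<close>: the letter \<open>y\<close> may follow \<open>x\<close> in a normal form; on \<open>{1..n}\<close> this fails
  exactly when \<open>y < x\<close> and the two generators commute.\<close>

definition Kadmissible :: "nat \<Rightarrow> nat \<Rightarrow> nat \<Rightarrow> bool" where
  "Kadmissible n x y \<longleftrightarrow> x \<le> y + 1 \<or> (x = n \<and> n \<le> y + 2)"

fun Knormal :: "nat \<Rightarrow> nat list \<Rightarrow> bool" where
  "Knormal n (x # y # w) \<longleftrightarrow> Kadmissible n x y \<and> Knormal n (y # w)"
| "Knormal n _ \<longleftrightarrow> True"

lemma Knormal_tl: "Knormal n (x # w) \<Longrightarrow> Knormal n w"
  by (cases w) auto

lemma Knormal_prefix: "Knormal n (xs @ ys) \<Longrightarrow> Knormal n xs"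
proof (induction n xs rule: Knormal.induct)
  case (1 n x y w) then show ?case by auto
qed auto

lemma not_Kadmissible_iff:
  "x \<in> {1..n} \<Longrightarrow> y \<in> {1..n} \<Longrightarrow> \<not> Kadmissible n x y \<longleftrightarrow> y < x \<and> Kcomm n x y"
  unfolding Kadmissible_def Kcomm_def Kcomm0_def by auto

lemma Kcomm_sym: "Kcomm n a b \<longleftrightarrow> Kcomm n b a"
  unfolding Kcomm_def by auto

lemma Kcomm_irrefl: "\<not> Kcomm n a a"
  unfolding Kcomm_def Kcomm0_def by auto

lemma Kstep_sym: "Kstep n w w' \<Longrightarrow> Kstep n w' w"
  unfolding Kstep_def using Kcomm_sym by blast

lemma Keq_refl: "Keq n w w"
  unfolding Keq_def by simp

lemma Keq_trans: "Keq n u v \<Longrightarrow> Keq n v w \<Longrightarrow> Keq n u w"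
  unfolding Keq_def by simp

lemma Keq_sym: "Keq n u v \<Longrightarrow> Keq n v u"
  unfolding Keq_def
proof (induction rule: rtranclp_induct)
  case (step y z) then show ?case
    by (meson Kstep_sym converse_rtranclp_into_rtranclp)
qed simp

lemma Kstep_length_set: "Kstep n w w' \<Longrightarrow> length w' = length w \<and> set w' = set w"
  unfolding Kstep_def by auto

lemma Keq_length_set: "Keq n w w' \<Longrightarrow> length w' = length w \<and> set w' = set w"
  unfolding Keq_def by (induction rule: rtranclp_induct) (auto dest: Kstep_length_set)

abbreviation pair_proj :: "nat \<Rightarrow> nat \<Rightarrow> nat list \<Rightarrow> nat list" where
  "pair_proj c d w \<equiv> filter (\<lambda>x. x = c \<or> x = d) w"

lemma Kstep_pair_proj:
  assumes "\<not> Kcomm n c d" "Kstep n w w'"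
  shows "pair_proj c d w = pair_proj c d w'"
proof -
  obtain u v a b where ab: "Kcomm n a b" "w = u @ [a, b] @ v" "w' = u @ [b, a] @ v"
    using assms(2) unfolding Kstep_def by blast
  have "\<not> ((a = c \<or> a = d) \<and> (b = c \<or> b = d))"
    using ab(1) assms(1) Kcomm_irrefl Kcomm_sym by metis
  then show ?thesis using ab by auto
qed

lemma Keq_pair_proj:
  assumes "\<not> Kcomm n c d" "Keq n w w'"
  shows "pair_proj c d w = pair_proj c d w'"
  using assms(2) unfolding Keq_def
  by (induction rule: rtranclp_induct) (auto dest: Kstep_pair_proj[OF assms(1)])

lemma Knormal_not_all_commuting:
  "Knormal n (x # p @ [a]) \<Longrightarrow> a < x \<Longrightarrow> Kcomm n a x \<Longrightarrow> \<forall>z\<in>set p. Kcomm n a z \<Longrightarrow> False"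
proof (induction p arbitrary: x)
  case Nil
  then have "Kadmissible n x a" by simp
  then show ?case using Nil(2,3) unfolding Kadmissible_def Kcomm_def Kcomm0_def by linarith
next
  case (Cons z p)
  have "Kadmissible n x z" "Knormal n (z # p @ [a])" "Kcomm n a z"
    using Cons.prems(1,4) by auto
  moreover from this have "a < z"
    using Cons.prems(2,3) unfolding Kadmissible_def Kcomm_def Kcomm0_def by auto
  ultimately show ?case using Cons.IH Cons.prems(4) by auto
qed

lemma Knormal_blocking_letter:
  assumes nf: "Knormal n (b # u)" and ab: "a < b" and au: "a \<in> set u"
  obtains c where "\<not> Kcomm n a c" "c \<noteq> a" "hd (pair_proj a c (b # u)) = c"
proof -
  obtain p s where u: "u = p @ a # s" and ap: "a \<notin> set p"
    using split_list_first[OF au] by blast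
  have "Knormal n (b # p @ [a])"
    using nf u Knormal_prefix[of n "b # p @ [a]" s] by simp
  then obtain c where c: "c \<in> set (b # p)" "\<not> Kcomm n a c"
    using Knormal_not_all_commuting[of n b p a] ab by auto
  have ca: "c \<noteq> a" using c(1) ap ab by auto
  have ne: "pair_proj a c (b # p) \<noteq> []"
    using c(1) by (auto simp: filter_empty_conv)
  have "set (pair_proj a c (b # p)) \<subseteq> {c}"
    using ap ab by auto
  then have "hd (pair_proj a c (b # p)) = c"
    using hd_in_set[OF ne] by auto
  moreover have "pair_proj a c (b # u) = pair_proj a c (b # p) @ pair_proj a c (a # s)"
    using u by simp
  ultimately have "hd (pair_proj a c (b # u)) = c" using ne by simp
  with c(2) ca show thesis by (rule that)
qed

lemma Knormal_head_not_greater: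
  assumes nf: "Knormal n (b # u)"
    and proj: "\<And>c d. \<not> Kcomm n c d \<Longrightarrow> pair_proj c d (a # v) = pair_proj c d (b # u)"
  shows "\<not> a < b"
proof
  assume ab: "a < b"
  have "pair_proj a a (b # u) = a # pair_proj a a v"
    using proj[of a a] Kcomm_irrefl by simp
  then have "a \<in> set (pair_proj a a u)" using ab by simp
  then have "a \<in> set u" by simp
  then obtain c where c: "\<not> Kcomm n a c" "c \<noteq> a" "hd (pair_proj a c (b # u)) = c"
    using Knormal_blocking_letter[OF nf ab] by blast
  have "c = hd (pair_proj a c (a # v))"
    using c(3) by (simp only: proj[OF c(1)])
  then show False using c(2) by simp
qed

lemma Knormal_eq_if_pair_proj_eq:
  assumes "Knormal n w" "Knormal n w'"
    and "\<And>c d. \<not> Kcomm n c d \<Longrightarrow> pair_proj c d w = pair_proj c d w'"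
  shows "w = w'"
  using assms
proof (induction w arbitrary: w')
  case Nil
  show ?case
  proof (cases w')
    case (Cons x _)
    then show ?thesis using Nil.prems(3)[of x x] Kcomm_irrefl by simp
  qed simp
next
  case (Cons a w)
  obtain b w1 where w': "w' = b # w1"
    using Cons.prems(3)[of a a] Kcomm_irrefl by (cases w') auto
  have "\<not> a < b" "\<not> b < a"
    using Knormal_head_not_greater[of n b w1 a w] Knormal_head_not_greater[of n a w b w1]
      Cons.prems unfolding w' by (metis, metis)
  then have ab: "a = b" by simp
  have "pair_proj c d w = pair_proj c d w1" if "\<not> Kcomm n c d" for c d
    using Cons.prems(3)[OF that] unfolding w' ab by (auto split: if_splits)
  then show ?case
    using Cons.IH[of w1] Cons.prems(1,2) Knormal_tl unfolding w' ab by blast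
qed

section \<open>Counting elements by their minimal representatives\<close>

abbreviation less_rel :: "(nat \<times> nat) set" where
  "less_rel \<equiv> {(a, b). a < b}"

lemma lenlex_swap_less: "y < x \<Longrightarrow> (u @ [y, x] @ v, u @ [x, y] @ v) \<in> lenlex less_rel"
  using lenlex_append2[of less_rel] by (simp add: irrefl_def Cons_lenlex_iff)

lemma not_Knormal_obtain_swap:
  assumes "\<not> Knormal n w" "set w \<subseteq> {1..n}"
  shows "\<exists>u v x y. w = u @ [x, y] @ v \<and> y < x \<and> Kcomm n x y"
  using assms
proof (induction n w rule: Knormal.induct)
  case (1 n x y w)
  show ?case
  proof (cases "Kadmissible n x y")
    case True
    then obtain u v a b where "y # w = u @ [a, b] @ v" "b < a" "Kcomm n a b"
      using 1 by auto
    then show ?thesis by (metis append_Cons)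
  next
    case False
    then have "y < x \<and> Kcomm n x y" using not_Kadmissible_iff "1.prems"(2) by simp
    then show ?thesis by (intro exI[of _ "[]"] exI[of _ w] exI[of _ x] exI[of _ y]) simp
  qed
qed auto

lemma Kclass_subset_Kwords: "Kclass n w0 \<subseteq> Kwords n"
  unfolding Kclass_def by auto

lemma Kclass_eq: "w \<in> Kclass n w0 \<Longrightarrow> Kclass n w = Kclass n w0"
  unfolding Kclass_def using Keq_sym Keq_trans by blast

lemma self_in_Kclass: "w \<in> Kwords n \<Longrightarrow> w \<in> Kclass n w"
  unfolding Kclass_def using Keq_refl by auto

lemma is_llex_min_Knormal:
  assumes "is_llex_min w (Kclass n w0)"
  shows "Knormal n w"
proof (rule ccontr)
  assume "\<not> Knormal n w"
  moreover have wX: "w \<in> Kclass n w0" using assms unfolding is_llex_min_def by auto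
  ultimately obtain u v x y where w: "w = u @ [x, y] @ v" and yx: "y < x" and c: "Kcomm n x y"
    using not_Knormal_obtain_swap Kclass_subset_Kwords unfolding Kwords_def by blast
  define w' where "w' = u @ [y, x] @ v"
  have "Kstep n w w'" unfolding Kstep_def w w'_def using c by blast
  then have "Keq n w0 w'" "set w' = set w"
    using wX Kstep_length_set unfolding Kclass_def Keq_def by auto
  then have "w' \<in> Kclass n w0" using wX unfolding Kclass_def Kwords_def by auto
  moreover have "w' \<noteq> w" using yx unfolding w w'_def by auto
  ultimately have "(w, w') \<in> lenlex less_rel" using assms unfolding is_llex_min_def by auto
  moreover have "(w', w) \<in> lenlex less_rel" unfolding w w'_def using lenlex_swap_less[OF yx] by simp
  moreover have "asym (lenlex less_rel)" by (rule asym_lenlex) (auto intro: asymI)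
  ultimately show False by (meson asymD)
qed

lemma is_llex_min_exists:
  assumes "w0 \<in> Kwords n"
  obtains w where "is_llex_min w (Kclass n w0)"
proof -
  obtain z where zX: "z \<in> Kclass n w0" and zmin: "\<And>y. (y, z) \<in> lenlex less_rel \<Longrightarrow> y \<notin> Kclass n w0"
    using wf_eq_minimal[THEN iffD1, OF wf_lenlex[OF wf_less], rule_format, OF self_in_Kclass[OF assms]]
    by blast
  have "total (lenlex less_rel)" by (rule total_lenlex) (auto simp: total_on_def)
  then have "(z, w') \<in> lenlex less_rel" if "w' \<in> Kclass n w0" "w' \<noteq> z" for w'
    using that zmin unfolding total_on_def by blast
  then show thesis using that zX unfolding is_llex_min_def by blast
qed

lemma Knormal_unique_in_Kclass:
  assumes "w \<in> Kclass n w0" "w' \<in> Kclass n w0" "Knormal n w" "Knormal n w'"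
  shows "w = w'"
proof -
  have "Keq n w w'" using assms(1,2) Keq_sym Keq_trans unfolding Kclass_def by blast
  then show ?thesis using Knormal_eq_if_pair_proj_eq[OF assms(3,4)] Keq_pair_proj by blast
qed

definition Knormal_words :: "nat \<Rightarrow> nat \<Rightarrow> nat \<Rightarrow> nat list set" where
  "Knormal_words n k m = {w \<in> Kwords n. length w = k \<and> Knormal n w \<and> w \<noteq> [] \<and> hd w = m}"

lemma c_coef_eq_card_Knormal_words: "c_coef n k m = card (Knormal_words n k m)"
proof -
  have "{X \<in> Kelems n k. \<exists>w. is_llex_min w X \<and> w \<noteq> [] \<and> hd w = m} = Kclass n ` Knormal_words n k m"
  proof (intro equalityI subsetI)
    fix X assume "X \<in> {X \<in> Kelems n k. \<exists>w. is_llex_min w X \<and> w \<noteq> [] \<and> hd w = m}"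
    then obtain w0 w where X: "X = Kclass n w0" and w0: "length w0 = k"
      and w: "is_llex_min w X" "w \<noteq> []" "hd w = m"
      unfolding Kelems_def by blast
    have wX: "w \<in> X" using w unfolding is_llex_min_def by auto
    then have "w \<in> Knormal_words n k m"
      using is_llex_min_Knormal w X w0 Keq_length_set unfolding Knormal_words_def Kclass_def by auto
    moreover have "X = Kclass n w" using Kclass_eq wX X by auto
    ultimately show "X \<in> Kclass n ` Knormal_words n k m" by blast
  next
    fix X assume "X \<in> Kclass n ` Knormal_words n k m"
    then obtain w where X: "X = Kclass n w" and w: "w \<in> Knormal_words n k m" by blast
    then have wX: "w \<in> X" using self_in_Kclass unfolding Knormal_words_def by auto
    obtain z where z: "is_llex_min z X"
      using is_llex_min_exists w X unfolding Knormal_words_def by blast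
    have "z = w"
      using Knormal_unique_in_Kclass is_llex_min_Knormal z wX X w
      unfolding is_llex_min_def Knormal_words_def by blast
    then show "X \<in> {X \<in> Kelems n k. \<exists>w. is_llex_min w X \<and> w \<noteq> [] \<and> hd w = m}"
      using z w X unfolding Kelems_def Knormal_words_def by auto
  qed
  moreover have "inj_on (Kclass n) (Knormal_words n k m)"
  proof (rule inj_onI)
    fix w w' assume w: "w \<in> Knormal_words n k m" and w': "w' \<in> Knormal_words n k m"
      and eq: "Kclass n w = Kclass n w'"
    have "w \<in> Kclass n w" "w' \<in> Kclass n w"
      using w w' eq self_in_Kclass unfolding Knormal_words_def by auto
    then show "w = w'" using Knormal_unique_in_Kclass w w' unfolding Knormal_words_def by blast
  qed
  ultimately show ?thesis unfolding c_coef_def by (simp add: card_image)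
qed

fun Kcount :: "nat \<Rightarrow> nat \<Rightarrow> nat \<Rightarrow> nat" where
  "Kcount n 0 x = 1"
| "Kcount n (Suc k) x = (\<Sum>y\<in>{y \<in> {1..n}. Kadmissible n x y}. Kcount n k y)"

lemma Knormal_words_Suc_0: "x \<in> {1..n} \<Longrightarrow> Knormal_words n (Suc 0) x = {[x]}"
  unfolding Knormal_words_def Kwords_def by (auto simp: length_Suc_conv)

lemma Knormal_words_Suc_Suc:
  assumes "x \<in> {1..n}"
  shows "Knormal_words n (Suc (Suc k)) x
    = (\<Union>y\<in>{y \<in> {1..n}. Kadmissible n x y}. Cons x ` Knormal_words n (Suc k) y)"
proof (intro equalityI subsetI)
  fix w assume w: "w \<in> Knormal_words n (Suc (Suc k)) x"
  then obtain y w' where "w = x # y # w'" "length w' = k"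
    unfolding Knormal_words_def by (auto simp: length_Suc_conv)
  then show "w \<in> (\<Union>y\<in>{y \<in> {1..n}. Kadmissible n x y}. Cons x ` Knormal_words n (Suc k) y)"
    using w unfolding Knormal_words_def Kwords_def by auto
next
  fix w assume "w \<in> (\<Union>y\<in>{y \<in> {1..n}. Kadmissible n x y}. Cons x ` Knormal_words n (Suc k) y)"
  then obtain y w' where "Kadmissible n x y" "w' \<in> Knormal_words n (Suc k) y" "w = x # w'"
    by blast
  then show "w \<in> Knormal_words n (Suc (Suc k)) x"
    using assms unfolding Knormal_words_def Kwords_def by (cases w') auto
qed

lemma finite_Knormal_words: "finite (Knormal_words n k x)"
proof (rule finite_subset)
  show "Knormal_words n k x \<subseteq> {w. set w \<subseteq> {1..n} \<and> length w = k}"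
    unfolding Knormal_words_def Kwords_def by auto
qed (rule finite_lists_length_eq, simp)

lemma card_Knormal_words: "x \<in> {1..n} \<Longrightarrow> card (Knormal_words n (Suc k) x) = Kcount n k x"
proof (induction k arbitrary: x)
  case 0
  then show ?case using Knormal_words_Suc_0 by simp
next
  case (Suc k)
  have "card (Knormal_words n (Suc (Suc k)) x)
      = (\<Sum>y\<in>{y \<in> {1..n}. Kadmissible n x y}. card (Cons x ` Knormal_words n (Suc k) y))"
    unfolding Knormal_words_Suc_Suc[OF Suc.prems]
    by (rule card_UN_disjoint) (auto simp: finite_Knormal_words, auto simp: Knormal_words_def)
  also have "\<dots> = Kcount n (Suc k) x"
    by (auto simp: card_image Suc.IH intro: sum.cong)
  finally show ?case .
qed

lemma c_coef_eq_Kcount: "x \<in> {1..n} \<Longrightarrow> c_coef n (Suc k) x = Kcount n k x"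
  using c_coef_eq_card_Knormal_words card_Knormal_words by simp

lemma Kcount_le: "Kcount n k x \<le> n ^ k"
proof (induction k arbitrary: x)
  case (Suc k)
  have "Kcount n (Suc k) x \<le> (\<Sum>y\<in>{y \<in> {1..n}. Kadmissible n x y}. n ^ k)"
    unfolding Kcount.simps by (rule sum_mono) (rule Suc.IH)
  also have "\<dots> \<le> (\<Sum>y\<in>{1..n}. n ^ k)" by (rule sum_mono2) auto
  finally show ?case by simp
qed simp

section \<open>Generating functions of transfer-matrix recurrences\<close>

lemma det_one_minus_smult_eq_reflected_char_poly:
  fixes M :: "'a :: field mat"
  assumes M: "M \<in> carrier_mat n n" and t: "t \<noteq> 0"
  shows "det (1\<^sub>m n - t \<cdot>\<^sub>m M) = t ^ n * poly (char_poly M) (1 / t)"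
proof -
  have "1\<^sub>m n - t \<cdot>\<^sub>m M = t \<cdot>\<^sub>m (- char_matrix M (1 / t))"
    by (rule eq_matI) (use M t in \<open>auto simp: char_matrix_def algebra_simps\<close>)
  then show ?thesis
    using M char_poly_matrix[OF M] by (simp add: char_matrix_def)
qed

lemma reflected_poly_nonzero_near_0:
  fixes p :: "real poly"
  assumes "p \<noteq> 0"
  obtains \<delta> where "\<delta> > 0" "\<And>t. 0 < \<bar>t\<bar> \<Longrightarrow> \<bar>t\<bar> < \<delta> \<Longrightarrow> t ^ degree p * poly p (1 / t) \<noteq> 0"
proof -
  have "poly (reflect_poly p) \<midarrow>0\<rightarrow> lead_coeff p"
    using poly_isCont[of 0 "reflect_poly p"] by (simp add: isCont_def poly_0_coeff_0)
  then have "\<forall>\<^sub>F t in at 0. poly (reflect_poly p) t \<noteq> 0"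
    by (rule tendsto_imp_eventually_ne) (use assms in simp)
  then obtain \<delta> where "\<delta> > 0" "\<And>t. t \<noteq> 0 \<Longrightarrow> \<bar>t\<bar> < \<delta> \<Longrightarrow> poly (reflect_poly p) t \<noteq> 0"
    unfolding eventually_at dist_real_def by auto
  then show thesis
    using that poly_reflect_poly_nz[of _ p] by (auto simp: divide_inverse)
qed

lemma summable_geometrically_bounded:
  fixes a :: "nat \<Rightarrow> real"
  assumes bound: "\<And>k. \<bar>a k\<bar> \<le> C ^ k" and t: "C * \<bar>t\<bar> < 1"
  shows "summable (\<lambda>k. a k * t ^ k)"
proof (rule summable_comparison_test[of _ "\<lambda>k. (C * \<bar>t\<bar>) ^ k"])
  have "0 \<le> C" using bound[of 1] by simp
  then show "summable (\<lambda>k. (C * \<bar>t\<bar>) ^ k)"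
    using t by (intro summable_geometric) simp
  show "\<exists>N. \<forall>k\<ge>N. norm (a k * t ^ k) \<le> (C * \<bar>t\<bar>) ^ k"
    using bound by (auto simp: abs_mult power_abs power_mult_distrib intro!: exI[of _ 0] mult_right_mono)
qed

lemma transfer_matrix_generating_function:
  fixes M :: "real mat" and a :: "nat \<Rightarrow> nat \<Rightarrow> real"
  assumes M: "M \<in> carrier_mat n n"
    and step: "\<And>k j. j < n \<Longrightarrow> a (Suc k) j = (\<Sum>i<n. M $$ (j, i) * a k i)"
    and bound: "\<And>k j. j < n \<Longrightarrow> \<bar>a k j\<bar> \<le> C ^ k"
    and t: "C * \<bar>t\<bar> < 1"
  shows "(1\<^sub>m n - t \<cdot>\<^sub>m M) *\<^sub>v vec n (\<lambda>j. \<Sum>k. a k j * t ^ k) = vec n (a 0)"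
proof (rule eq_vecI)
  define h where "h j = (\<Sum>k. a k j * t ^ k)" for j
  have sums: "(\<lambda>k. a k j * t ^ k) sums h j" if "j < n" for j
    unfolding h_def using summable_geometrically_bounded[OF bound[OF that] t] by (rule summable_sums)
  fix j assume "j < dim_vec (vec n (a 0))"
  then have j: "j < n" by simp
  have "(\<lambda>k. \<Sum>i<n. M $$ (j, i) * (a k i * t ^ k)) sums (\<Sum>i<n. M $$ (j, i) * h i)"
    using sums by (intro sums_sum sums_mult) simp
  then have "(\<lambda>k. t * (\<Sum>i<n. M $$ (j, i) * (a k i * t ^ k))) sums (t * (\<Sum>i<n. M $$ (j, i) * h i))"
    by (rule sums_mult)
  moreover have "t * (\<Sum>i<n. M $$ (j, i) * (a k i * t ^ k)) = a (Suc k) j * t ^ Suc k" for k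
    by (simp add: step[OF j] sum_distrib_left sum_distrib_right algebra_simps)
  ultimately have "(\<lambda>k. a (Suc k) j * t ^ Suc k) sums (t * (\<Sum>i<n. M $$ (j, i) * h i))"
    by simp
  then have "(\<lambda>k. a k j * t ^ k) sums (t * (\<Sum>i<n. M $$ (j, i) * h i) + a 0 j)"
    using sums_Suc_iff[of "\<lambda>k. a k j * t ^ k"] by simp
  then have hj: "h j = a 0 j + t * (\<Sum>i<n. M $$ (j, i) * h i)"
    using sums_unique2[OF sums[OF j]] by simp
  have "((1\<^sub>m n - t \<cdot>\<^sub>m M) *\<^sub>v vec n h) $ j = (\<Sum>i<n. (1\<^sub>m n - t \<cdot>\<^sub>m M) $$ (j, i) * h i)"
    using M j by (simp add: scalar_prod_def atLeast0LessThan)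
  also have "\<dots> = (\<Sum>i<n. (if j = i then h i else 0) - t * (M $$ (j, i) * h i))"
    by (rule sum.cong) (use M j in \<open>auto simp: algebra_simps\<close>)
  also have "\<dots> = h j - t * (\<Sum>i<n. M $$ (j, i) * h i)"
    using j by (simp add: sum_subtractf sum_distrib_left)
  finally show "((1\<^sub>m n - t \<cdot>\<^sub>m M) *\<^sub>v vec n (\<lambda>j. \<Sum>k. a k j * t ^ k)) $ j = vec n (a 0) $ j"
    using j hj unfolding h_def by simp
qed (use M in simp)

section \<open>Determinants\<close>

definition row_differences :: "'a :: ab_group_add mat \<Rightarrow> 'a mat" where
  "row_differences A = mat (dim_row A) (dim_col A)
     (\<lambda>(j, i). if Suc j < dim_row A then A $$ (j, i) - A $$ (Suc j, i) else A $$ (j, i))"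

lemma det_row_differences:
  fixes A :: "'a :: comm_ring_1 mat"
  assumes A: "A \<in> carrier_mat n n"
  shows "det (row_differences A) = det A"
proof -
  define L :: "'a mat" where "L = mat n n (\<lambda>(j, k). if k = j then 1 else if k = Suc j then -1 else 0)"
  have L: "L \<in> carrier_mat n n" unfolding L_def by simp
  have "det L = prod_list (diag_mat L)"
    by (rule det_upper_triangular[OF _ L]) (auto simp: L_def upper_triangular_def)
  also have "\<dots> = 1" unfolding prod_list_diag_prod using L by (simp add: L_def)
  finally have "det L = 1" .
  moreover have "L * A = row_differences A"
  proof (rule eq_matI)
    fix j i assume "j < dim_row (row_differences A)" "i < dim_col (row_differences A)"
    then have ji: "j < n" "i < n" using A by (auto simp: row_differences_def)
    have "(L * A) $$ (j, i) = (\<Sum>k<n. (if k = j then A $$ (k, i) else 0) - (if k = Suc j then A $$ (k, i) else 0))"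
      using ji A L by (auto simp: scalar_prod_def L_def atLeast0LessThan intro: sum.cong)
    also have "\<dots> = row_differences A $$ (j, i)"
      using ji A by (simp add: sum_subtractf row_differences_def)
    finally show "(L * A) $$ (j, i) = row_differences A $$ (j, i)" .
  qed (use A L in \<open>auto simp: row_differences_def\<close>)
  ultimately show ?thesis using det_mult[OF L A] by simp
qed

lemma det_single_nonzero_in_col:
  fixes A :: "'a :: comm_ring_1 mat"
  assumes A: "A \<in> carrier_mat n n" and k: "k < n" and p: "p < n"
    and zero: "\<And>i. i < n \<Longrightarrow> i \<noteq> k \<Longrightarrow> A $$ (i, p) = 0"
  shows "det A = A $$ (k, p) * cofactor A k p"
proof -
  have "det A = (\<Sum>i<n. A $$ (i, p) * cofactor A i p)"
    using laplace_expansion_column[OF A p] .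
  also have "\<dots> = (\<Sum>i\<in>{k}. A $$ (i, p) * cofactor A i p)"
    by (rule sum.mono_neutral_right) (use k zero in auto)
  finally show ?thesis by simp
qed

lemma det_block_lower_triangular:
  fixes A :: "'a :: idom mat"
  assumes A: "A \<in> carrier_mat (r + s) (r + s)"
    and zero: "\<And>j i. j < r \<Longrightarrow> r \<le> i \<Longrightarrow> i < r + s \<Longrightarrow> A $$ (j, i) = 0"
  shows "det A = det (mat r r (\<lambda>(j, i). A $$ (j, i))) * det (mat s s (\<lambda>(j, i). A $$ (j + r, i + r)))"
proof -
  have "A = four_block_mat (mat r r (\<lambda>(j, i). A $$ (j, i))) (0\<^sub>m r s)
      (mat s r (\<lambda>(j, i). A $$ (j + r, i))) (mat s s (\<lambda>(j, i). A $$ (j + r, i + r)))"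
    by (rule eq_matI) (use A zero in auto)
  then show ?thesis
    by (metis det_four_block_mat_upper_right_zero mat_carrier)
qed

text \<open>Entry \<open>(j, c)\<close> of \<open>1 - t M\<^sub>n\<close> after subtracting row \<open>j + 1\<close> from row \<open>j\<close>, for \<open>j < n - 1\<close>.\<close>

definition Kdiff :: "nat \<Rightarrow> real \<Rightarrow> nat \<Rightarrow> nat \<Rightarrow> real" where
  "Kdiff n t j c = (if c = j then 1 else 0) - (if c = Suc j then 1 else 0)
     - t * ((if Suc c = j then 1 else 0) - (if j = n - 2 \<and> c = n - 3 then 1 else 0))"

lemma M_mat_row_difference:
  assumes "3 \<le> n" "Suc j < n" "c < n"
  shows "M_mat n $$ (j, c) - M_mat n $$ (Suc j, c)
    = (if Suc c = j then 1 else 0) - (if j = n - 2 \<and> c = n - 3 then 1 else 0)"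
  using assms unfolding M_mat_def by auto

lemma det_K_replace_col_ones:
  fixes t :: real
  assumes n: "3 \<le> n" and p: "p < n - 1"
  shows "det (replace_col (1\<^sub>m n - t \<cdot>\<^sub>m M_mat n) (vec n (\<lambda>_. 1)) p)
       = (-1) ^ (n - 1 + p) * det (mat (n - 1) (n - 1) (\<lambda>(j, i). Kdiff n t j (insert_index p i)))"
proof -
  define E where "E = replace_col (1\<^sub>m n - t \<cdot>\<^sub>m M_mat n) (vec n (\<lambda>_. 1)) p"
  define C where "C = row_differences E"
  have E: "E \<in> carrier_mat n n" and C: "C \<in> carrier_mat n n"
    unfolding C_def E_def row_differences_def replace_col_def M_mat_def by auto
  have C_col_p: "C $$ (j, p) = (if j = n - 1 then 1 else 0)" if "j < n" for j
    using that p unfolding C_def E_def row_differences_def replace_col_def M_mat_def by auto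
  have "det E = C $$ (n - 1, p) * cofactor C (n - 1) p"
    unfolding det_row_differences[OF E, folded C_def, symmetric]
    by (rule det_single_nonzero_in_col[OF C]) (use n p C_col_p in auto)
  also have "\<dots> = (-1) ^ (n - 1 + p) * det (mat_delete C (n - 1) p)"
    using n p C_col_p unfolding cofactor_def by simp
  also have "mat_delete C (n - 1) p = mat (n - 1) (n - 1) (\<lambda>(j, i). Kdiff n t j (insert_index p i))"
  proof (rule eq_matI)
    fix j i assume "j < dim_row (mat (n - 1) (n - 1) (\<lambda>(j, i). Kdiff n t j (insert_index p i)))"
      and "i < dim_col (mat (n - 1) (n - 1) (\<lambda>(j, i). Kdiff n t j (insert_index p i)))"
    then have ji: "j < n - 1" "i < n - 1" by auto
    define c where "c = insert_index p i"
    have c: "c < n" "c \<noteq> p" using ji unfolding c_def insert_index_def by auto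
    have "mat_delete C (n - 1) p $$ (j, i) = C $$ (j, c)"
      using ji C unfolding mat_delete_def c_def insert_index_def by auto
    also have "\<dots> = E $$ (j, c) - E $$ (Suc j, c)"
      using ji c E unfolding C_def row_differences_def by auto
    also have "\<dots> = (if j = c then 1 else 0) - (if Suc j = c then 1 else 0)
        - t * (M_mat n $$ (j, c) - M_mat n $$ (Suc j, c))"
      using ji c unfolding E_def replace_col_def M_mat_def by (simp add: algebra_simps)
    also have "\<dots> = Kdiff n t j c"
      using ji c n unfolding Kdiff_def by (subst M_mat_row_difference) auto
    finally show "mat_delete C (n - 1) p $$ (j, i) = mat (n - 1) (n - 1) (\<lambda>(j, i). Kdiff n t j (insert_index p i)) $$ (j, i)"
      using ji unfolding c_def by simp
  qed (use C in auto)
  finally show ?thesis unfolding E_def .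
qed

text \<open>Adding row \<open>p - 1\<close> to row \<open>p - 2\<close> of the minor in \<open>det_K_replace_col_ones\<close> makes it block
  lower triangular.\<close>

definition Kminor :: "nat \<Rightarrow> real \<Rightarrow> nat \<Rightarrow> real mat" where
  "Kminor n t p = mat (n - 1) (n - 1) (\<lambda>(j, i). Kdiff n t j (insert_index p i)
     + (if j + 2 = p then Kdiff n t (Suc j) (insert_index p i) else 0))"

lemma Kdiff_diag: "3 \<le> n \<Longrightarrow> Kdiff n t j j = 1"
  unfolding Kdiff_def by auto

lemma Kdiff_Suc: "3 \<le> n \<Longrightarrow> Kdiff n t j (Suc j) = -1"
  unfolding Kdiff_def by auto

lemma Kdiff_above: "Suc j < c \<Longrightarrow> Kdiff n t j c = 0"
  unfolding Kdiff_def by auto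

lemma det_Kminor:
  assumes "p + 2 \<le> n"
  shows "det (mat (n - 1) (n - 1) (\<lambda>(j, i). Kdiff n t j (insert_index p i))) = det (Kminor n t p)"
proof (cases "2 \<le> p")
  case True
  let ?D = "mat (n - 1) (n - 1) (\<lambda>(j, i). Kdiff n t j (insert_index p i))"
  have "Kminor n t p = addrow 1 (p - 2) (p - 1) ?D"
    by (rule eq_matI) (use True assms in \<open>auto simp: Kminor_def mat_addrow_def Suc_diff_Suc\<close>)
  then show ?thesis
    using det_addrow[of "p - 1" "n - 1" "p - 2" ?D 1] True assms by simp
next
  case False
  then have "j + 2 = p \<longleftrightarrow> False" for j by simp
  then show ?thesis unfolding Kminor_def by simp
qed

lemma Kminor_upper_right:
  assumes "3 \<le> n" "j + 1 < p" "p \<le> i + 1" "i < n - 1"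
  shows "Kminor n t p $$ (j, i) = 0"
proof -
  have entry: "Kminor n t p $$ (j, i) = Kdiff n t j (insert_index p i)
     + (if j + 2 = p then Kdiff n t (Suc j) (insert_index p i) else 0)"
    using assms unfolding Kminor_def by simp
  consider "j + 2 = p" "i + 1 = p" | "j + 2 = p" "p \<le> i" | "j + 2 < p"
    using assms by linarith
  then show ?thesis
  proof cases
    case 1
    then have "p = Suc (Suc j)" "i = Suc j" by simp_all
    then show ?thesis using entry by (simp add: insert_index_def Kdiff_diag Kdiff_Suc assms(1))
  next
    case 2
    then show ?thesis using entry by (simp add: insert_index_def Kdiff_above)
  next
    case 3
    then have "Suc j < insert_index p i" using assms unfolding insert_index_def by simp
    then show ?thesis using 3 entry Kdiff_above by simp
  qed
qed

lemma Kminor_upper_left: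
  assumes "j < p - 1" "i < p - 1" "p + 2 \<le> n"
  shows "Kminor n t p $$ (j, i) = row_differences (1\<^sub>m (p - 1) - t \<cdot>\<^sub>m N_mat (p - 1)) $$ (j, i)"
  using assms by (auto simp: Kminor_def Kdiff_def row_differences_def N_mat_def)

lemma det_Kminor_lower_right:
  assumes n: "3 \<le> n" and p: "1 \<le> p" "p + 2 \<le> n"
  shows "det (mat (n - p) (n - p) (\<lambda>(a, b). Kminor n t p $$ (a + (p - 1), b + (p - 1))))
    = (-1) ^ (n - p - 1)"
proof -
  let ?R = "mat (n - p) (n - p) (\<lambda>(a, b). Kminor n t p $$ (a + (p - 1), b + (p - 1)))"
  have entry: "?R $$ (a, b) = Kdiff n t (a + (p - 1)) (insert_index p (b + (p - 1)))"
    if "a < n - p" "b < n - p" for a b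
    using that p unfolding Kminor_def by simp
  have ins: "insert_index p (b + (p - 1)) = (if b = 0 then p - 1 else Suc (b + (p - 1)))" for b
    using p unfolding insert_index_def by auto
  have diag: "?R $$ (a, a) = (if a = 0 then 1 else -1)" if "a < n - p" for a
    using entry[OF that that] unfolding ins by (simp add: Kdiff_diag[OF n] Kdiff_Suc[OF n])
  have upper: "?R $$ (a, b) = 0" if "a < b" "b < n - p" for a b
    using that entry[of a b] unfolding ins by (simp add: Kdiff_above)
  have "det ?R = prod_list (diag_mat ?R)"
    by (rule det_lower_triangular[of "n - p"]) (use upper in auto)
  also have "\<dots> = (\<Prod>a = 0..<n - p. if a = 0 then 1 else -1)"
    unfolding prod_list_diag_prod using diag by (intro prod.cong) auto
  also have "\<dots> = (\<Prod>a = 1..<n - p. -1)"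
    using p by (subst prod.atLeast_Suc_lessThan) (auto intro: prod.cong)
  also have "\<dots> = (-1) ^ (n - p - 1)"
    by simp
  finally show ?thesis .
qed

lemma det_K_replace_col_ones_eq_det_N:
  fixes t :: real
  assumes n: "3 \<le> n" and p: "1 \<le> p" "p + 2 \<le> n"
  shows "det (replace_col (1\<^sub>m n - t \<cdot>\<^sub>m M_mat n) (vec n (\<lambda>_. 1)) p)
       = det (1\<^sub>m (p - 1) - t \<cdot>\<^sub>m N_mat (p - 1))"
proof -
  let ?B = "1\<^sub>m (p - 1) - t \<cdot>\<^sub>m N_mat (p - 1)"
  have B: "?B \<in> carrier_mat (p - 1) (p - 1)" by (rule minus_carrier_mat) (simp add: N_mat_def)
  have K: "Kminor n t p \<in> carrier_mat ((p - 1) + (n - p)) ((p - 1) + (n - p))"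
    using p by (simp add: Kminor_def)
  have "mat (p - 1) (p - 1) (\<lambda>(j, i). Kminor n t p $$ (j, i)) = row_differences ?B"
    by (rule eq_matI) (use p Kminor_upper_left[of _ p _ n t] in \<open>auto simp: row_differences_def N_mat_def\<close>)
  then have "det (Kminor n t p) = det ?B * (-1) ^ (n - p - 1)"
    using det_block_lower_triangular[OF K] Kminor_upper_right[OF n] det_row_differences[OF B]
      det_Kminor_lower_right[OF n p] by simp
  moreover have "(n - 1 + p) + (n - p - 1) = 2 * (n - 1)" using p by simp
  then have "(-1 :: real) ^ (n - 1 + p) * (-1) ^ (n - p - 1) = 1"
    by (simp only: power_add[symmetric]) (simp add: power_mult)
  ultimately show ?thesis
    using det_K_replace_col_ones[OF n] det_Kminor p by (simp add: algebra_simps)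
qed

section \<open>The generating function\<close>

lemma M_mat_Kadmissible:
  "3 \<le> n \<Longrightarrow> j < n \<Longrightarrow> i < n \<Longrightarrow> M_mat n $$ (j, i) = (if Kadmissible n (Suc j) (Suc i) then 1 else 0)"
  unfolding M_mat_def Kadmissible_def by auto

lemma Kcount_Suc_M_mat:
  assumes n: "3 \<le> n" and j: "j < n"
  shows "real (Kcount n (Suc k) (Suc j)) = (\<Sum>i<n. M_mat n $$ (j, i) * real (Kcount n k (Suc i)))"
proof -
  have "{1..n} = Suc ` {..<n}"
  proof (intro equalityI subsetI)
    fix y assume "y \<in> {1..n}"
    then have "y = Suc (y - 1)" "y - 1 < n" by auto
    then show "y \<in> Suc ` {..<n}" by blast
  qed auto
  have "Kcount n (Suc k) (Suc j) = (\<Sum>y\<in>{1..n}. if Kadmissible n (Suc j) y then Kcount n k y else 0)"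
    unfolding Kcount.simps by (rule sum.inter_filter) simp
  also have "\<dots> = (\<Sum>i<n. if Kadmissible n (Suc j) (Suc i) then Kcount n k (Suc i) else 0)"
    unfolding \<open>{1..n} = Suc ` {..<n}\<close> by (simp add: sum.reindex)
  finally have "real (Kcount n (Suc k) (Suc j))
      = (\<Sum>i<n. real (if Kadmissible n (Suc j) (Suc i) then Kcount n k (Suc i) else 0))"
    by simp
  also have "\<dots> = (\<Sum>i<n. M_mat n $$ (j, i) * real (Kcount n k (Suc i)))"
    by (rule sum.cong) (simp_all add: M_mat_Kadmissible[OF n j])
  finally show ?thesis .
qed

lemma A_poly_eq_char_poly: "A_poly r = char_poly (N_mat r)"
proof (cases "r = 0")
  case True
  have "char_poly_matrix (N_mat 0) = 1\<^sub>m 0"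
    by (rule eq_matI) (auto simp: char_poly_matrix_def N_mat_def)
  then show ?thesis using True by (simp add: A_poly_def char_poly_def)
qed (simp add: A_poly_def)

lemma Kcount_sums:
  fixes t :: real
  assumes n: "3 \<le> n" and p: "1 \<le> p" "p + 2 \<le> n"
    and t: "t \<noteq> 0" "real n * \<bar>t\<bar> < 1" and K: "t ^ n * poly (K_poly n) (1 / t) \<noteq> 0"
  shows "(\<lambda>k. real (Kcount n k (Suc p)) * t ^ k)
    sums (t ^ (p - 1) * poly (A_poly (p - 1)) (1 / t) / (t ^ n * poly (K_poly n) (1 / t)))"
proof -
  let ?X = "1\<^sub>m n - t \<cdot>\<^sub>m M_mat n"
  define h where "h = vec n (\<lambda>j. \<Sum>k. real (Kcount n k (Suc j)) * t ^ k)"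
  have X: "?X \<in> carrier_mat n n" and M: "M_mat n \<in> carrier_mat n n"
    by (auto simp: M_mat_def)
  have bound: "\<bar>real (Kcount n k j)\<bar> \<le> real n ^ k" for k j
    using Kcount_le[of n k j] by (simp flip: of_nat_power)
  have "?X *\<^sub>v h = vec n (\<lambda>_. 1)"
    using transfer_matrix_generating_function[OF M Kcount_Suc_M_mat[OF n] bound, of t] t(2)
    unfolding h_def by (simp add: mult.commute)
  then have "h $ p * det ?X = det (1\<^sub>m (p - 1) - t \<cdot>\<^sub>m N_mat (p - 1))"
    using cramer_lemma_mat[OF X _, of h p] det_K_replace_col_ones_eq_det_N[OF n p] p
    by (simp add: h_def)
  then have "(\<Sum>k. real (Kcount n k (Suc p)) * t ^ k) * (t ^ n * poly (K_poly n) (1 / t))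
      = t ^ (p - 1) * poly (A_poly (p - 1)) (1 / t)"
    using p t(1) det_one_minus_smult_eq_reflected_char_poly[OF M t(1)]
      det_one_minus_smult_eq_reflected_char_poly[of "N_mat (p - 1)" "p - 1" t]
    by (simp add: h_def K_poly_def A_poly_eq_char_poly N_mat_def)
  then have "(\<Sum>k. real (Kcount n k (Suc p)) * t ^ k)
      = t ^ (p - 1) * poly (A_poly (p - 1)) (1 / t) / (t ^ n * poly (K_poly n) (1 / t))"
    using K by (simp add: eq_divide_eq)
  then show ?thesis
    using summable_sums[OF summable_geometrically_bounded[of "\<lambda>k. real (Kcount n k (Suc p))", OF bound t(2)]]
    by simp
qed

theorem lemma5:
  fixes n m :: nat
  assumes "n \<ge> 3" and "2 \<le> m" and "m \<le> n - 1"
  shows "\<exists>\<epsilon>>0. \<forall>t::real. 0 < \<bar>t\<bar> \<and> \<bar>t\<bar> < \<epsilon> \<longrightarrow>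
           (\<lambda>k. real (c_coef n (Suc k) m) * t ^ Suc k) sums
             (t ^ (m - 1) * poly (A_poly (m - 2)) (1 / t) / (t ^ n * poly (K_poly n) (1 / t)))"
proof -
  have deg: "degree (K_poly n) = n" and "lead_coeff (K_poly n) = 1"
    using degree_monic_char_poly[of "M_mat n" n] unfolding K_poly_def M_mat_def by auto
  then have "K_poly n \<noteq> 0" by auto
  then obtain \<delta> where \<delta>: "\<delta> > 0"
    and K: "\<And>t. 0 < \<bar>t\<bar> \<Longrightarrow> \<bar>t\<bar> < \<delta> \<Longrightarrow> t ^ n * poly (K_poly n) (1 / t) \<noteq> 0"
    by (rule reflected_poly_nonzero_near_0) (simp add: deg)
  show ?thesis
  proof (intro exI[of _ "min \<delta> (1 / real n)"] conjI allI impI)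
    fix t :: real assume t: "0 < \<bar>t\<bar> \<and> \<bar>t\<bar> < min \<delta> (1 / real n)"
    then have "real n * \<bar>t\<bar> < 1" using assms(1) by (simp add: field_simps)
    then have "(\<lambda>k. real (Kcount n k m) * t ^ k)
        sums (t ^ (m - 2) * poly (A_poly (m - 2)) (1 / t) / (t ^ n * poly (K_poly n) (1 / t)))"
      using Kcount_sums[of n "m - 1" t] K t assms by (simp add: numeral_2_eq_2)
    then have "(\<lambda>k. t * (real (Kcount n k m) * t ^ k))
        sums (t * (t ^ (m - 2) * poly (A_poly (m - 2)) (1 / t) / (t ^ n * poly (K_poly n) (1 / t))))"
      by (rule sums_mult)
    moreover have "m - 1 = Suc (m - 2)" using assms(2) by simp
    moreover have "c_coef n (Suc k) m = Kcount n k m" for k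
      using c_coef_eq_Kcount assms by simp
    ultimately show "(\<lambda>k. real (c_coef n (Suc k) m) * t ^ Suc k)
        sums (t ^ (m - 1) * poly (A_poly (m - 2)) (1 / t) / (t ^ n * poly (K_poly n) (1 / t)))"
      by (simp add: ac_simps)
  qed (use \<delta> assms in auto)
qed

end
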